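(* Let $\mathcal{G}^{kdv}$ be the Lie algebra of holomorphic maps $A$ from $\{1/\epsilon<|\lambda|<\infty\}$ to $\mathfrak{sl}(2,\mathbb{C})$ satisfying the KdV reality condition, and for $k\in\mathbb{Z}$ define the bilinear form $\langle A,B\rangle_{\Lambda_k}=\sum_i\mathrm{tr}(A_iB_{-i+k-1})$, where $A=\sum_iA_i\lambda^i$, $B=\sum_iB_i\lambda^i$. Then the restriction of $\langle\cdot,\cdot\rangle_{\Lambda_k}$ to $\mathcal{G}^{kdv}$ is degenerate if $k$ is even, and non-degenerate if $k$ is odd.
   Context: The KdV reality condition: $\overline{A(\bar\lambda)}=A(\lambda)$ and $\phi(\lambda)^{-1}A(\lambda)\phi(\lambda)=\phi(-\lambda)^{-1}A(-\lambda)\phi(-\lambda)$ with $\phi(\lambda)=\begin{pmatrix}1&\lambda\\0&1\end{pmatrix}$. The form $\langle A,B\rangle_{\Lambda_k}$ is the coefficient of $\lambda^{k-1}$ in $\mathrm{tr}(A(\lambda)B(\lambda))$, i.e. $\frac1{2\pi i}\oint\lambda^{-k}\mathrm{tr}(A(\lambda)B(\lambda))d\lambda$. *)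

theory Defs
  imports "HOL-Complex_Analysis.Complex_Analysis"
begin

definition annulus :: "real \<Rightarrow> complex set" where
  "annulus eps = {z. 1 / eps < norm z}"

definition phi :: "complex \<Rightarrow> complex^2^2" where
  "phi l = (\<chi> i j. if i = j then 1 else if i = 1 \<and> j = 2 then l else 0)"

definition mat_cnj :: "complex^2^2 \<Rightarrow> complex^2^2" where
  "mat_cnj M = (\<chi> i j. cnj (M $ i $ j))"

text \<open>Maps are normalised to be 0 outside
  the annulus, so that they are determined by their values on it.\<close>
definition G_kdv :: "real \<Rightarrow> (complex \<Rightarrow> complex^2^2) set" where
  "G_kdv eps = {A.
      (\<forall>i j. (\<lambda>z. A z $ i $ j) holomorphic_on annulus eps) \<and>
      (\<forall>z\<in>annulus eps. trace (A z) = 0) \<and>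
      (\<forall>z\<in>annulus eps. mat_cnj (A (cnj z)) = A z) \<and>
      (\<forall>z\<in>annulus eps.
          matrix_inv (phi z) ** A z ** phi z =
          matrix_inv (phi (- z)) ** A (- z) ** phi (- z)) \<and>
      (\<forall>z. z \<notin> annulus eps \<longrightarrow> A z = 0)}"

text \<open>The form <A,B>_{Lambda_k} = (1/(2 pi i)) \<ointegral> lambda^{-k} tr(A B) d lambda,
  over a circle |lambda| = r inside the annulus (here r = 1/eps + 1; by Cauchy's
  theorem the value is independent of r > 1/eps); this is the coefficient of
  lambda^{k-1} in the Laurent expansion of tr(A B), i.e.
  sum_i tr(A_i B_{k-1-i}).\<close>
definition Lambda_form :: "real \<Rightarrow> int \<Rightarrow> (complex \<Rightarrow> complex^2^2) \<Rightarrow> (complex \<Rightarrow> complex^2^2) \<Rightarrow> complex" where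
  "Lambda_form eps k A B =
     contour_integral (circlepath 0 (1 / eps + 1)) (\<lambda>z. z powi (- k) * trace (A z ** B z))
       / (2 * of_real pi * \<i>)"

definition degenerate_on :: "'a set \<Rightarrow> ('a \<Rightarrow> 'a \<Rightarrow> complex) \<Rightarrow> 'a \<Rightarrow> bool" where
  "degenerate_on G f zero \<longleftrightarrow> (\<exists>A\<in>G. A \<noteq> zero \<and> (\<forall>B\<in>G. f A B = 0))"

end

theory Submission
  imports Defs
begin

(*
  Write A = [[a, b], [c, d]].  Conjugation by phi(lambda) sends A to
  [[a - lambda c, (a - lambda c) lambda + b - lambda d], [c, c lambda + d]], so the
  reality condition says that these four entries are even functions of lambda.

  For even k, the constant nilpotent E = [[0, 1], [0, 0]] lies in G^kdv, and <E, B> is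
  the integral of lambda^(-k) c_B(lambda), an even function, over a circle centred at 0;
  hence it vanishes.

  For odd k, let A be orthogonal to G^kdv.  Pairing A with elements of G^kdv whose
  entries are multiples of lambda^(2n) shows that all integrals of lambda^(2n-k) f over
  the circle vanish, first for f = c, then (as c = 0) for f = a, then for f = b.  These
  are the odd Laurent coefficients of f; the even ones vanish since f is even.  So f = 0,
  because f(w) is the difference of the Cauchy integrals of f over circles outside and
  inside |w|, and each of these vanishes once the Cauchy kernel is expanded in a
  geometric series.
*)

(* HOL-Complex_Analysis leaves $ bound to fps_nth; free it for matrix entries M $ i $ j. *)
unbundle no Formal_Power_Series.fps_syntax

section \<open>Circle integrals outside a disc\<close>

lemma contour_integral_circlepath_exterior_eq:
  assumes "0 \<le> R" "R < r1" "R < r2" and f: "f holomorphic_on {z. R < norm z}"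
  shows "contour_integral (circlepath 0 r1) f = contour_integral (circlepath 0 r2) f"
proof (rule Cauchy_theorem_homotopic_loops[OF _ _ f])
  show "open {z::complex. R < norm z}"
    by (intro open_Collect_less continuous_intros)
  show "homotopic_loops {z. R < norm z} (circlepath 0 r1) (circlepath 0 r2)"
  proof (rule homotopic_loops_linear)
    fix t :: real
    define e where "e = exp (2 * of_real pi * \<i> * of_real t)"
    have "linear (\<lambda>s. of_real s * e)"
      by (simp add: linear_iff algebra_simps scaleR_conv_of_real)
    then have "closed_segment (circlepath 0 r1 t) (circlepath 0 r2 t) = (\<lambda>s. of_real s * e) ` closed_segment r1 r2"
      by (simp add: circlepath e_def closed_segment_linear_image [symmetric])
    moreover have "R < norm (of_real s * e)" if "s \<in> closed_segment r1 r2" for s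
      using that assms by (auto simp: e_def norm_mult norm_exp closed_segment_eq_real_ivl split: if_splits)
    ultimately show "closed_segment (circlepath 0 r1 t) (circlepath 0 r2 t) \<subseteq> {z. R < norm z}"
      by auto
  qed auto
qed auto

lemma uminus_circlepath: "uminus \<circ> circlepath 0 r = shiftpath (1/2) (circlepath 0 r)"
proof
  fix x :: real
  have "(uminus \<circ> circlepath 0 r) x = circlepath 0 r (x + 1/2)"
    using circlepath_minus [of 0 r x] by (simp add: circlepath)
  then show "(uminus \<circ> circlepath 0 r) x = shiftpath (1/2) (circlepath 0 r) x"
    using circlepath_add1 [of 0 r "x - 1/2"] by (simp add: shiftpath_def add.commute)
qed

lemma contour_integral_circlepath_even_eq_0:
  assumes "\<And>z. norm z = \<bar>r\<bar> \<Longrightarrow> g (- z) = g z"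
  shows "contour_integral (circlepath 0 r) g = 0"
proof -
  let ?C = "contour_integral (circlepath 0 r) g"
  have "?C = contour_integral (shiftpath (1/2) (circlepath 0 r)) g"
    by (simp add: contour_integral_shiftpath)
  also have "\<dots> = - contour_integral (circlepath 0 r) (\<lambda>z. g (- z))"
    by (simp add: uminus_circlepath [symmetric] contour_integral_negatepath)
  also have "contour_integral (circlepath 0 r) (\<lambda>z. g (- z)) = ?C"
    by (rule contour_integral_eq) (use assms in auto)
  finally show ?thesis
    by simp
qed

lemma contour_integral_circlepath_geometric_eq_0:
  fixes h q :: "complex \<Rightarrow> complex"
  assumes \<rho>: "0 < \<rho>" and h: "continuous_on (sphere 0 \<rho>) h" and q: "continuous_on (sphere 0 \<rho>) q"
    and q_le: "\<And>z. norm z = \<rho> \<Longrightarrow> norm (q z) \<le> c" and "c < 1"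
    and telescope: "\<And>N. contour_integral (circlepath 0 \<rho>) (\<lambda>z. h z * q z ^ N * (1 - q z)) = 0"
  shows "contour_integral (circlepath 0 \<rho>) h = 0"
proof -
  let ?I = "\<lambda>F. contour_integral (circlepath 0 \<rho>) F"
  have integrable: "F contour_integrable_on circlepath 0 \<rho>" if "continuous_on (sphere 0 \<rho>) F" for F
    using that \<rho> by (intro contour_integrable_continuous_circlepath) simp
  have power_eq: "?I (\<lambda>z. h z * q z ^ N) = ?I h" for N
  proof (induction N)
    case (Suc N)
    have "?I (\<lambda>z. h z * q z ^ Suc N) = ?I (\<lambda>z. h z * q z ^ N - h z * q z ^ N * (1 - q z))"
      by (simp add: algebra_simps)
    also have "\<dots> = ?I (\<lambda>z. h z * q z ^ N)"
      using telescope [of N]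
      by (subst contour_integral_diff) (auto intro!: integrable continuous_intros h q)
    finally show ?case
      using Suc by simp
  qed simp
  have "compact (h ` sphere 0 \<rho>)"
    by (intro compact_continuous_image h compact_sphere)
  then obtain M where "\<forall>z\<in>sphere 0 \<rho>. norm (h z) \<le> M"
    by (auto dest!: compact_imp_bounded simp: bounded_iff)
  then have M: "norm (h z) \<le> M" if "norm z = \<rho>" for z
    using that by simp
  have "0 \<le> c"
    using q_le [of "of_real \<rho>"] \<rho> by (simp add: order_trans [OF norm_ge_zero])
  have "0 \<le> M"
    using M [of "of_real \<rho>"] \<rho> by (simp add: order_trans [OF norm_ge_zero])
  have bound: "norm (?I h) \<le> M * c ^ N * (2 * pi * \<rho>)" for N
  proof (rule has_contour_integral_bound_circlepath)
    have "(\<lambda>z. h z * q z ^ N) contour_integrable_on circlepath 0 \<rho>"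
      by (intro integrable continuous_intros h q)
    then show "((\<lambda>z. h z * q z ^ N) has_contour_integral ?I h) (circlepath 0 \<rho>)"
      using power_eq [of N] has_contour_integral_integral by fastforce
    show "norm (h z * q z ^ N) \<le> M * c ^ N" if "norm (z - 0) = \<rho>" for z
      unfolding norm_mult norm_power
      using that M q_le \<open>0 \<le> M\<close> by (intro mult_mono power_mono) simp_all
  qed (use \<rho> \<open>0 \<le> M\<close> \<open>0 \<le> c\<close> in auto)
  have "(\<lambda>N. M * c ^ N * (2 * pi * \<rho>)) \<longlonglongrightarrow> 0"
    using \<open>0 \<le> c\<close> \<open>c < 1\<close> by (intro tendsto_mult_left_zero tendsto_mult_right_zero LIMSEQ_power_zero) auto
  then have "norm (?I h) \<le> 0"
    by (rule LIMSEQ_le_const) (use bound in blast)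
  then show ?thesis
    by simp
qed

lemma contour_integral_circlepath_Cauchy_kernel_eq_0:
  fixes g :: "complex \<Rightarrow> complex"
  assumes \<rho>: "0 < \<rho>" and g: "continuous_on (sphere 0 \<rho>) g"
    and moments: "\<And>j::int. contour_integral (circlepath 0 \<rho>) (\<lambda>z. z powi j * g z) = 0"
    and w: "norm w \<noteq> \<rho>"
  shows "contour_integral (circlepath 0 \<rho>) (\<lambda>z. g z / (z - w)) = 0"
proof -
  have z_ne: "z \<noteq> 0" "z \<noteq> w" if "norm z = \<rho>" for z
    using that \<rho> w by auto
  have kernel: "continuous_on (sphere 0 \<rho>) (\<lambda>z. g z / (z - w))"
    by (intro continuous_intros g) (use z_ne in auto)
  have scaled_moment: "contour_integral (circlepath 0 \<rho>) F = 0"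
    if F: "\<And>z. norm z = \<rho> \<Longrightarrow> F z = a * (z powi j * g z)" for F a j
  proof -
    have "contour_integral (circlepath 0 \<rho>) F = contour_integral (circlepath 0 \<rho>) (\<lambda>z. a * (z powi j * g z))"
      by (rule contour_integral_eq) (use F \<rho> in simp)
    also have "\<dots> = a * contour_integral (circlepath 0 \<rho>) (\<lambda>z. z powi j * g z)"
      by (intro contour_integral_lmul contour_integrable_continuous_circlepath continuous_intros g)
        (use \<rho> z_ne g in auto)
    finally show ?thesis
      using moments by simp
  qed
  consider "norm w < \<rho>" | "\<rho> < norm w"
    using w by linarith
  then show ?thesis
  proof cases
    case 1
    show ?thesis
    proof (rule contour_integral_circlepath_geometric_eq_0 [OF \<rho> kernel, of "\<lambda>z. w / z" "norm w / \<rho>"])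
      fix N
      show "contour_integral (circlepath 0 \<rho>) (\<lambda>z. g z / (z - w) * (w / z) ^ N * (1 - w / z)) = 0"
      proof (rule scaled_moment [of _ "w ^ N" "- int N - 1"])
        fix z :: complex
        assume "norm z = \<rho>"
        with z_ne have "z \<noteq> 0" "z - w \<noteq> 0" by auto
        then show "g z / (z - w) * (w / z) ^ N * (1 - w / z) = w ^ N * (z powi (- int N - 1) * g z)"
          by (simp add: power_int_diff power_int_minus field_simps power_divide)
      qed
    qed (use 1 \<rho> z_ne in \<open>auto intro!: continuous_intros simp: norm_divide\<close>)
  next
    case 2
    show ?thesis
    proof (rule contour_integral_circlepath_geometric_eq_0 [OF \<rho> kernel, of "\<lambda>z. z / w" "\<rho> / norm w"])
      fix N
      show "contour_integral (circlepath 0 \<rho>) (\<lambda>z. g z / (z - w) * (z / w) ^ N * (1 - z / w)) = 0"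
      proof (rule scaled_moment [of _ "- 1 / w ^ Suc N" "int N"])
        fix z :: complex
        assume "norm z = \<rho>"
        with z_ne 2 \<rho> have "w \<noteq> 0" "z - w \<noteq> 0" by auto
        then show "g z / (z - w) * (z / w) ^ N * (1 - z / w) = - 1 / w ^ Suc N * (z powi int N * g z)"
          by (simp add: field_simps power_divide)
      qed
    qed (use 2 \<rho> in \<open>auto intro!: continuous_intros simp: norm_divide divide_simps\<close>)
  qed
qed

lemma Cauchy_integral_formula_exterior:
  fixes f :: "complex \<Rightarrow> complex"
  assumes R: "0 \<le> R" and f: "f holomorphic_on {z. R < norm z}"
    and r1: "R < r1" "r1 < norm w" and r2: "norm w < r2"
  shows "contour_integral (circlepath 0 r2) (\<lambda>z. f z / (z - w)) -
      contour_integral (circlepath 0 r1) (\<lambda>z. f z / (z - w)) = 2 * of_real pi * \<i> * f w"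
proof -
  define h where "h = (\<lambda>z. if z = w then deriv f w else (f z - f w) / (z - w))"
  have h_integral: "contour_integral (circlepath 0 \<rho>) h =
      contour_integral (circlepath 0 \<rho>) (\<lambda>z. f z / (z - w)) -
        f w * contour_integral (circlepath 0 \<rho>) (\<lambda>z. 1 / (z - w))"
    if \<rho>: "R < \<rho>" "norm w \<noteq> \<rho>" for \<rho>
  proof -
    have ne: "z \<noteq> w" if "z \<in> sphere 0 \<rho>" for z
      using that \<rho> by auto
    have "continuous_on (sphere 0 \<rho>) f"
      by (rule holomorphic_on_imp_continuous_on, rule holomorphic_on_subset [OF f]) (use \<rho> in auto)
    then have integrable: "(\<lambda>z. 1 / (z - w)) contour_integrable_on circlepath 0 \<rho>"
      and integrable_f: "(\<lambda>z. f z / (z - w)) contour_integrable_on circlepath 0 \<rho>"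
      using \<rho> R ne by (auto intro!: contour_integrable_continuous_circlepath continuous_intros)
    have "contour_integral (circlepath 0 \<rho>) h =
        contour_integral (circlepath 0 \<rho>) (\<lambda>z. f z / (z - w) - f w * (1 / (z - w)))"
      by (rule contour_integral_eq) (use ne R \<rho> in \<open>auto simp: h_def diff_divide_distrib\<close>)
    then show ?thesis
      by (simp only: contour_integral_diff [OF integrable_f contour_integrable_lmul [OF integrable]]
          contour_integral_lmul [OF integrable])
  qed
  have "h holomorphic_on {z. R < norm z}"
    unfolding h_def by (rule pole_lemma_open [OF f]) (intro open_Collect_less continuous_intros)
  then have "contour_integral (circlepath 0 r1) h = contour_integral (circlepath 0 r2) h"
    using r1 r2 R by (intro contour_integral_circlepath_exterior_eq) auto
  moreover have "contour_integral (circlepath 0 r2) (\<lambda>z. 1 / (z - w)) = 2 * of_real pi * \<i>"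
    using Cauchy_integral_circlepath_simple [of "\<lambda>_. 1" 0 r2 w] r2 by (auto intro: contour_integral_unique)
  moreover have "contour_integral (circlepath 0 r1) (\<lambda>z. 1 / (z - w)) = 0"
  proof (rule contour_integral_unique, rule Cauchy_theorem_convex_simple [of _ "ball 0 (norm w)"])
    show "(\<lambda>z. 1 / (z - w)) holomorphic_on ball 0 (norm w)"
      by (intro holomorphic_intros) auto
    show "path_image (circlepath 0 r1) \<subseteq> ball 0 (norm w)"
      using r1 R by auto
  qed auto
  ultimately show ?thesis
    using h_integral [of r1] h_integral [of r2] r1 r2 by (simp add: algebra_simps)
qed

lemma exterior_moments_eq_0_imp_eq_0:
  fixes f :: "complex \<Rightarrow> complex"
  assumes R: "0 \<le> R" and r: "R < r" and f: "f holomorphic_on {z. R < norm z}"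
    and moments: "\<And>j::int. contour_integral (circlepath 0 r) (\<lambda>z. z powi j * f z) = 0"
    and w: "R < norm w"
  shows "f w = 0"
proof -
  have Cauchy_zero: "contour_integral (circlepath 0 \<rho>) (\<lambda>z. f z / (z - w)) = 0"
    if \<rho>: "R < \<rho>" "norm w \<noteq> \<rho>" for \<rho>
  proof (rule contour_integral_circlepath_Cauchy_kernel_eq_0)
    show "continuous_on (sphere 0 \<rho>) f"
      by (rule holomorphic_on_imp_continuous_on, rule holomorphic_on_subset [OF f]) (use \<rho> in auto)
    fix j :: int
    have "(\<lambda>z. z powi j * f z) holomorphic_on {z. R < norm z}"
      using R by (intro holomorphic_intros f) auto
    then show "contour_integral (circlepath 0 \<rho>) (\<lambda>z. z powi j * f z) = 0"
      using moments [of j] contour_integral_circlepath_exterior_eq [of R \<rho> r] \<rho> r R by simp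
  qed (use \<rho> R in auto)
  have "2 * of_real pi * \<i> * f w = 0"
    using Cauchy_integral_formula_exterior [OF R f, of "(R + norm w) / 2" w "norm w + 1"]
      Cauchy_zero [of "(R + norm w) / 2"] Cauchy_zero [of "norm w + 1"] w by simp
  then show ?thesis
    by simp
qed

lemma even_function_odd_moments_eq_0_imp_eq_0:
  fixes f :: "complex \<Rightarrow> complex" and k :: int
  assumes R: "0 \<le> R" and r: "R < r" and "odd k" and f: "f holomorphic_on {z. R < norm z}"
    and even: "\<And>z. R < norm z \<Longrightarrow> f (- z) = f z"
    and odd_moments: "\<And>n::int. contour_integral (circlepath 0 r) (\<lambda>z. z powi (2 * n - k) * f z) = 0"
    and w: "R < norm w"
  shows "f w = 0"
proof (rule exterior_moments_eq_0_imp_eq_0 [OF R r f _ w])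
  fix j :: int
  show "contour_integral (circlepath 0 r) (\<lambda>z. z powi j * f z) = 0"
  proof (cases "even j")
    case True
    show ?thesis
      by (rule contour_integral_circlepath_even_eq_0) (use True even R r in simp)
  next
    case False
    then have "j = 2 * ((j + k) div 2) - k"
      using \<open>odd k\<close> by (metis add_diff_cancel_right' dvd_mult_div_cancel odd_add)
    then show ?thesis
      using odd_moments by metis
  qed
qed

section \<open>Two-by-two matrices\<close>

definition mat2 :: "'a \<Rightarrow> 'a \<Rightarrow> 'a \<Rightarrow> 'a \<Rightarrow> 'a^2^2" where
  "mat2 a b c d = (\<chi> i j. if i = 1 then (if j = 1 then a else b) else (if j = 1 then c else d))"

lemma mat2_nth [simp]:
  "mat2 a b c d $ 1 $ 1 = a" "mat2 a b c d $ 1 $ 2 = b"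
  "mat2 a b c d $ 2 $ 1 = c" "mat2 a b c d $ 2 $ 2 = d"
  by (simp_all add: mat2_def)

lemma mat2_eta: "mat2 (M $ 1 $ 1) (M $ 1 $ 2) (M $ 2 $ 1) (M $ 2 $ 2) = M"
  by (simp add: vec_eq_iff forall_2 mat2_def)

lemma mat2_eq_iff [simp]:
  "mat2 a b c d = mat2 a' b' c' d' \<longleftrightarrow> a = a' \<and> b = b' \<and> c = c' \<and> d = d'"
  by (auto simp: vec_eq_iff forall_2 mat2_def)

lemma mat2_eq_0_iff [simp]: "mat2 a b c d = 0 \<longleftrightarrow> a = 0 \<and> b = 0 \<and> c = 0 \<and> d = 0"
  by (auto simp: vec_eq_iff forall_2 mat2_def)

lemma mat2_mult_mat2 [simp]:
  fixes a b c d :: "'a::comm_semiring_1"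
  shows "mat2 a b c d ** mat2 a' b' c' d' = mat2 (a*a' + b*c') (a*b' + b*d') (c*a' + d*c') (c*b' + d*d')"
  by (simp add: matrix_matrix_mult_def vec_eq_iff forall_2 sum_2 mat2_def)

lemma trace_mat2 [simp]: "trace (mat2 a b c d) = a + d"
  by (simp add: trace_def sum_2)

lemma trace_mult_mat2:
  fixes M :: "'a::comm_semiring_1^2^2"
  shows "trace (M ** mat2 a b c d) = M $ 1 $ 1 * a + M $ 1 $ 2 * c + M $ 2 $ 1 * b + M $ 2 $ 2 * d"
  by (simp add: trace_def sum_2 matrix_matrix_mult_def mat2_def add.assoc)

lemma mat_cnj_mat2 [simp]: "mat_cnj (mat2 a b c d) = mat2 (cnj a) (cnj b) (cnj c) (cnj d)"
  by (simp add: mat_cnj_def vec_eq_iff forall_2 mat2_def)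

lemma phi_eq_mat2: "phi z = mat2 1 z 0 1"
  by (simp add: phi_def mat2_def vec_eq_iff forall_2)

lemma matrix_inv_phi: "matrix_inv (phi z) = phi (- z)"
proof -
  have "mat 1 = mat2 (1::complex) 0 0 1"
    by (simp add: mat_def mat2_def vec_eq_iff forall_2)
  then have inverse: "phi z ** phi (- z) = mat 1" "phi (- z) ** phi z = mat 1"
    by (simp_all add: phi_eq_mat2)
  let ?X = "matrix_inv (phi z)"
  have X: "phi z ** ?X = mat 1 \<and> ?X ** phi z = mat 1"
    unfolding matrix_inv_def by (rule someI [of _ "phi (- z)"]) (use inverse in simp)
  have "?X = (?X ** phi z) ** phi (- z)"
    by (simp add: inverse matrix_mul_assoc [symmetric])
  also have "\<dots> = phi (- z)"
    using X by (simp add: matrix_mul_lid)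
  finally show ?thesis .
qed

lemma phi_similarity:
  "matrix_inv (phi z) ** M ** phi z =
     mat2 (M $ 1 $ 1 - z * M $ 2 $ 1) ((M $ 1 $ 1 - z * M $ 2 $ 1) * z + M $ 1 $ 2 - z * M $ 2 $ 2)
       (M $ 2 $ 1) (M $ 2 $ 1 * z + M $ 2 $ 2)"
proof -
  obtain a b c d where "M = mat2 a b c d"
    using mat2_eta [of M, symmetric] by blast
  then show ?thesis
    unfolding matrix_inv_phi by (simp add: phi_eq_mat2 algebra_simps)
qed

section \<open>The KdV loop algebra\<close>

definition mat2_on :: "real \<Rightarrow> (complex \<Rightarrow> complex) \<Rightarrow> (complex \<Rightarrow> complex) \<Rightarrow>
    (complex \<Rightarrow> complex) \<Rightarrow> (complex \<Rightarrow> complex) \<Rightarrow> complex \<Rightarrow> complex^2^2" where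
  "mat2_on eps a b c d = (\<lambda>z. if z \<in> annulus eps then mat2 (a z) (b z) (c z) (d z) else 0)"

lemma annulus_uminus_iff [simp]: "- z \<in> annulus eps \<longleftrightarrow> z \<in> annulus eps"
  by (simp add: annulus_def)

lemma annulus_cnj_iff [simp]: "cnj z \<in> annulus eps \<longleftrightarrow> z \<in> annulus eps"
  by (simp add: annulus_def)

lemma zero_notin_annulus: "0 < eps \<Longrightarrow> 0 \<notin> annulus eps"
  by (simp add: annulus_def)

lemma mat2_on_in_G_kdv:
  assumes "a holomorphic_on annulus eps" "b holomorphic_on annulus eps"
    "c holomorphic_on annulus eps" "d holomorphic_on annulus eps"
    and "\<And>z. z \<in> annulus eps \<Longrightarrow> a z + d z = 0"
    and "\<And>z. z \<in> annulus eps \<Longrightarrow>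
      cnj (a (cnj z)) = a z \<and> cnj (b (cnj z)) = b z \<and> cnj (c (cnj z)) = c z \<and> cnj (d (cnj z)) = d z"
    and "\<And>z. z \<in> annulus eps \<Longrightarrow>
      matrix_inv (phi z) ** mat2 (a z) (b z) (c z) (d z) ** phi z =
      matrix_inv (phi (- z)) ** mat2 (a (- z)) (b (- z)) (c (- z)) (d (- z)) ** phi (- z)"
  shows "mat2_on eps a b c d \<in> G_kdv eps"
  unfolding G_kdv_def mem_Collect_eq
proof (intro conjI allI ballI impI)
  fix i j :: 2
  have "(\<lambda>z. mat2 (a z) (b z) (c z) (d z) $ i $ j) holomorphic_on annulus eps"
    using exhaust_2 [of i] exhaust_2 [of j] assms(1-4) by auto
  then show "(\<lambda>z. mat2_on eps a b c d z $ i $ j) holomorphic_on annulus eps"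
    by (rule holomorphic_transform) (simp add: mat2_on_def)
next
  fix z
  assume z: "z \<in> annulus eps"
  show "trace (mat2_on eps a b c d z) = 0"
    using z assms(5) by (simp add: mat2_on_def)
  show "mat_cnj (mat2_on eps a b c d (cnj z)) = mat2_on eps a b c d z"
    using z assms(6) [OF z] by (simp add: mat2_on_def)
  show "matrix_inv (phi z) ** mat2_on eps a b c d z ** phi z =
      matrix_inv (phi (- z)) ** mat2_on eps a b c d (- z) ** phi (- z)"
    using z assms(7) [OF z] by (simp add: mat2_on_def)
qed (simp add: mat2_on_def)

lemma G_kdv_holomorphic:
  "A \<in> G_kdv eps \<Longrightarrow> (\<lambda>z. A z $ i $ j) holomorphic_on annulus eps"
  unfolding G_kdv_def by blast

lemma G_kdv_trace: "A \<in> G_kdv eps \<Longrightarrow> z \<in> annulus eps \<Longrightarrow> A z $ 1 $ 1 + A z $ 2 $ 2 = 0"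
  unfolding G_kdv_def by (auto simp: trace_def sum_2)

lemma G_kdv_outside: "A \<in> G_kdv eps \<Longrightarrow> z \<notin> annulus eps \<Longrightarrow> A z = 0"
  unfolding G_kdv_def by blast

lemma G_kdv_reality:
  "A \<in> G_kdv eps \<Longrightarrow> z \<in> annulus eps \<Longrightarrow>
    matrix_inv (phi z) ** A z ** phi z = matrix_inv (phi (- z)) ** A (- z) ** phi (- z)"
  unfolding G_kdv_def by blast

lemma Lambda_form_eq_contour_integral:
  assumes "0 < eps" and tr: "\<And>z. z \<in> annulus eps \<Longrightarrow> trace (A z ** B z) = g z"
  shows "Lambda_form eps k A B =
    contour_integral (circlepath 0 (1/eps + 1)) (\<lambda>z. z powi (- k) * g z) / (2 * of_real pi * \<i>)"
proof -
  have "contour_integral (circlepath 0 (1/eps + 1)) (\<lambda>z. z powi (- k) * trace (A z ** B z)) =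
      contour_integral (circlepath 0 (1/eps + 1)) (\<lambda>z. z powi (- k) * g z)"
  proof (rule contour_integral_eq)
    fix z
    assume "z \<in> path_image (circlepath 0 (1/eps + 1))"
    then have "z \<in> annulus eps"
      using \<open>0 < eps\<close> by (simp add: annulus_def)
    then show "z powi (- k) * trace (A z ** B z) = z powi (- k) * g z"
      by (simp add: tr)
  qed
  then show ?thesis
    by (simp add: Lambda_form_def)
qed

lemma Lambda_orthogonal_even_entry_eq_0:
  assumes eps: "0 < eps" and "odd k"
    and orth: "\<forall>B\<in>G_kdv eps. Lambda_form eps k A B = 0"
    and f: "f holomorphic_on annulus eps" and even: "\<And>z. z \<in> annulus eps \<Longrightarrow> f (- z) = f z"
    and test: "\<And>n::int. \<exists>B\<in>G_kdv eps. \<forall>z\<in>annulus eps. trace (A z ** B z) = z powi (2 * n) * f z"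
    and w: "w \<in> annulus eps"
  shows "f w = 0"
proof (rule even_function_odd_moments_eq_0_imp_eq_0 [of "1/eps" "1/eps + 1" k f])
  fix n :: int
  obtain B where "B \<in> G_kdv eps"
    and tr: "\<And>z. z \<in> annulus eps \<Longrightarrow> trace (A z ** B z) = z powi (2 * n) * f z"
    using test by blast
  have "Lambda_form eps k A B =
      contour_integral (circlepath 0 (1/eps + 1)) (\<lambda>z. z powi (- k) * (z powi (2 * n) * f z)) / (2 * of_real pi * \<i>)"
    using eps tr by (rule Lambda_form_eq_contour_integral)
  then have "contour_integral (circlepath 0 (1/eps + 1)) (\<lambda>z. z powi (- k) * (z powi (2 * n) * f z)) = 0"
    using orth \<open>B \<in> G_kdv eps\<close> by simp
  moreover have "contour_integral (circlepath 0 (1/eps + 1)) (\<lambda>z. z powi (2 * n - k) * f z) =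
      contour_integral (circlepath 0 (1/eps + 1)) (\<lambda>z. z powi (- k) * (z powi (2 * n) * f z))"
  proof (rule contour_integral_eq)
    fix z
    assume "z \<in> path_image (circlepath 0 (1/eps + 1))"
    then have "z \<noteq> 0"
      using eps by (auto simp: divide_simps add_nonneg_eq_0_iff)
    then show "z powi (2 * n - k) * f z = z powi (- k) * (z powi (2 * n) * f z)"
      by (simp add: power_int_diff power_int_minus field_simps)
  qed
  ultimately show "contour_integral (circlepath 0 (1/eps + 1)) (\<lambda>z. z powi (2 * n - k) * f z) = 0"
    by simp
qed (use assms in \<open>auto simp: annulus_def\<close>)

lemma kdv_orthogonal_lower_left_eq_0:
  assumes eps: "0 < eps" and "odd k" and A: "A \<in> G_kdv eps"
    and orth: "\<forall>B\<in>G_kdv eps. Lambda_form eps k A B = 0" and "w \<in> annulus eps"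
  shows "A w $ 2 $ 1 = 0"
proof (rule Lambda_orthogonal_even_entry_eq_0 [OF eps \<open>odd k\<close> orth G_kdv_holomorphic [OF A]])
  show "A (- z) $ 2 $ 1 = A z $ 2 $ 1" if "z \<in> annulus eps" for z
    using G_kdv_reality [OF A that] by (simp add: phi_similarity)
  fix n :: int
  let ?T = "mat2_on eps (\<lambda>_. 0) (\<lambda>z. z powi (2 * n)) (\<lambda>_. 0) (\<lambda>_. 0)"
  have "?T \<in> G_kdv eps"
    by (rule mat2_on_in_G_kdv) (auto intro!: holomorphic_intros simp: phi_similarity zero_notin_annulus [OF eps])
  moreover have "trace (A z ** ?T z) = z powi (2 * n) * A z $ 2 $ 1" if "z \<in> annulus eps" for z
    using that by (simp add: mat2_on_def trace_mult_mat2)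
  ultimately show "\<exists>B\<in>G_kdv eps. \<forall>z\<in>annulus eps. trace (A z ** B z) = z powi (2 * n) * A z $ 2 $ 1"
    by blast
qed fact

lemma kdv_orthogonal_diagonal_eq_0:
  assumes eps: "0 < eps" and "odd k" and A: "A \<in> G_kdv eps"
    and orth: "\<forall>B\<in>G_kdv eps. Lambda_form eps k A B = 0" and w: "w \<in> annulus eps"
  shows "A w $ 1 $ 1 = 0"
proof -
  have c: "A z $ 2 $ 1 = 0" if "z \<in> annulus eps" for z
    using kdv_orthogonal_lower_left_eq_0 [OF eps \<open>odd k\<close> A orth that] .
  have "2 * A w $ 1 $ 1 = 0"
  proof (rule Lambda_orthogonal_even_entry_eq_0 [OF eps \<open>odd k\<close> orth _ _ _ w])
    show "(\<lambda>z. 2 * A z $ 1 $ 1) holomorphic_on annulus eps"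
      by (intro holomorphic_intros G_kdv_holomorphic [OF A])
    show "2 * A (- z) $ 1 $ 1 = 2 * A z $ 1 $ 1" if "z \<in> annulus eps" for z
      using G_kdv_reality [OF A that] c [OF that] c [of "- z"] that by (simp add: phi_similarity)
    fix n :: int
    let ?T = "mat2_on eps (\<lambda>z. z powi (2 * n)) (\<lambda>z. - 2 * z * z powi (2 * n)) (\<lambda>_. 0) (\<lambda>z. - (z powi (2 * n)))"
    have "?T \<in> G_kdv eps"
      by (rule mat2_on_in_G_kdv)
        (auto intro!: holomorphic_intros simp: phi_similarity algebra_simps zero_notin_annulus [OF eps])
    moreover have "trace (A z ** ?T z) = z powi (2 * n) * (2 * A z $ 1 $ 1)" if "z \<in> annulus eps" for z
    proof -
      have "A z $ 2 $ 2 = - A z $ 1 $ 1"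
        using G_kdv_trace [OF A that] by (simp add: add_eq_0_iff)
      then show ?thesis
        using that c [OF that] by (simp add: mat2_on_def trace_mult_mat2 algebra_simps)
    qed
    ultimately show "\<exists>B\<in>G_kdv eps. \<forall>z\<in>annulus eps. trace (A z ** B z) = z powi (2 * n) * (2 * A z $ 1 $ 1)"
      by blast
  qed
  then show ?thesis
    by simp
qed

lemma kdv_orthogonal_upper_right_eq_0:
  assumes eps: "0 < eps" and "odd k" and A: "A \<in> G_kdv eps"
    and orth: "\<forall>B\<in>G_kdv eps. Lambda_form eps k A B = 0" and w: "w \<in> annulus eps"
  shows "A w $ 1 $ 2 = 0"
proof (rule Lambda_orthogonal_even_entry_eq_0 [OF eps \<open>odd k\<close> orth G_kdv_holomorphic [OF A] _ _ w])
  have diagonal: "A z $ 1 $ 1 = 0" "A z $ 2 $ 1 = 0" "A z $ 2 $ 2 = 0" if "z \<in> annulus eps" for z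
    using kdv_orthogonal_diagonal_eq_0 [OF assms(1-4) that] kdv_orthogonal_lower_left_eq_0 [OF assms(1-4) that]
      G_kdv_trace [OF A that] by simp_all
  show "A (- z) $ 1 $ 2 = A z $ 1 $ 2" if "z \<in> annulus eps" for z
    using G_kdv_reality [OF A that] diagonal [OF that] diagonal [of "- z"] that by (simp add: phi_similarity)
  fix n :: int
  let ?T = "mat2_on eps (\<lambda>z. z * z powi (2 * n)) (\<lambda>_. 0) (\<lambda>z. z powi (2 * n)) (\<lambda>z. - (z * z powi (2 * n)))"
  have "?T \<in> G_kdv eps"
    by (rule mat2_on_in_G_kdv)
      (auto intro!: holomorphic_intros simp: phi_similarity algebra_simps zero_notin_annulus [OF eps])
  moreover have "trace (A z ** ?T z) = z powi (2 * n) * A z $ 1 $ 2" if "z \<in> annulus eps" for z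
    using that diagonal [OF that] by (simp add: mat2_on_def trace_mult_mat2)
  ultimately show "\<exists>B\<in>G_kdv eps. \<forall>z\<in>annulus eps. trace (A z ** B z) = z powi (2 * n) * A z $ 1 $ 2"
    by blast
qed

lemma kdv_orthogonal_eq_0:
  assumes eps: "0 < eps" and "odd k" and A: "A \<in> G_kdv eps"
    and orth: "\<forall>B\<in>G_kdv eps. Lambda_form eps k A B = 0"
  shows "A = (\<lambda>_. 0)"
proof
  fix z
  show "A z = 0"
  proof (cases "z \<in> annulus eps")
    case True
    have "A z $ 1 $ 1 = 0" "A z $ 1 $ 2 = 0" "A z $ 2 $ 1 = 0" "A z $ 2 $ 2 = 0"
      using kdv_orthogonal_diagonal_eq_0 [OF assms True] kdv_orthogonal_upper_right_eq_0 [OF assms True]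
        kdv_orthogonal_lower_left_eq_0 [OF assms True] G_kdv_trace [OF A True] by simp_all
    then have "mat2 (A z $ 1 $ 1) (A z $ 1 $ 2) (A z $ 2 $ 1) (A z $ 2 $ 2) = 0"
      by simp
    then show ?thesis
      by (simp only: mat2_eta)
  qed (rule G_kdv_outside [OF A])
qed

lemma nilpotent_in_G_kdv: "mat2_on eps (\<lambda>_. 0) (\<lambda>_. 1) (\<lambda>_. 0) (\<lambda>_. 0) \<in> G_kdv eps"
  by (rule mat2_on_in_G_kdv) (simp_all add: phi_similarity)

lemma Lambda_form_nilpotent_eq_0_if_even:
  assumes eps: "0 < eps" and "even k" and B: "B \<in> G_kdv eps"
  shows "Lambda_form eps k (mat2_on eps (\<lambda>_. 0) (\<lambda>_. 1) (\<lambda>_. 0) (\<lambda>_. 0)) B = 0"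
proof -
  have "Lambda_form eps k (mat2_on eps (\<lambda>_. 0) (\<lambda>_. 1) (\<lambda>_. 0) (\<lambda>_. 0)) B =
      contour_integral (circlepath 0 (1/eps + 1)) (\<lambda>z. z powi (- k) * B z $ 2 $ 1) / (2 * of_real pi * \<i>)"
    by (rule Lambda_form_eq_contour_integral [OF eps], subst trace_mul_sym) (simp add: mat2_on_def trace_mult_mat2)
  also have "contour_integral (circlepath 0 (1/eps + 1)) (\<lambda>z. z powi (- k) * B z $ 2 $ 1) = 0"
  proof (rule contour_integral_circlepath_even_eq_0)
    fix z :: complex
    assume "norm z = \<bar>1/eps + 1\<bar>"
    then have "z \<in> annulus eps"
      using eps by (simp add: annulus_def)
    then show "(- z) powi (- k) * B (- z) $ 2 $ 1 = z powi (- k) * B z $ 2 $ 1"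
      using G_kdv_reality [OF B \<open>z \<in> annulus eps\<close>] \<open>even k\<close> by (simp add: phi_similarity)
  qed
  finally show ?thesis
    by simp
qed

theorem proposition6p2:
  fixes eps :: real and k :: int
  assumes "eps > 0"
  shows "(even k \<longrightarrow> degenerate_on (G_kdv eps) (Lambda_form eps k) (\<lambda>_. 0))
       \<and> (odd k \<longrightarrow> \<not> degenerate_on (G_kdv eps) (Lambda_form eps k) (\<lambda>_. 0))"
proof (intro conjI impI)
  assume "even k"
  let ?E = "mat2_on eps (\<lambda>_. 0) (\<lambda>_. 1) (\<lambda>_. 0) (\<lambda>_. 0)"
  have "of_real (1/eps + 1) \<in> annulus eps"
    unfolding annulus_def mem_Collect_eq norm_of_real using assms by simp
  then have "?E \<noteq> (\<lambda>_. 0)"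
    by (auto simp: mat2_on_def fun_eq_iff)
  then show "degenerate_on (G_kdv eps) (Lambda_form eps k) (\<lambda>_. 0)"
    unfolding degenerate_on_def
    using nilpotent_in_G_kdv Lambda_form_nilpotent_eq_0_if_even [OF assms \<open>even k\<close>] by blast
next
  assume "odd k"
  then show "\<not> degenerate_on (G_kdv eps) (Lambda_form eps k) (\<lambda>_. 0)"
    unfolding degenerate_on_def using kdv_orthogonal_eq_0 [OF assms] by blast
qed

end
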